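(* Let $B$ be a skew left brace and let $I/J$ be a chief factor of $B$ which is an abelian brace. Then $I/J$ is either a Frattini chief factor or a complemented chief factor of $B$. If moreover $B$ is finite, then every complement of $I/J$ in $B/J$ is a maximal subbrace of $B/J$.
   Context: A skew left brace (brace) is a set $B$ with two group structures $(B,+)$ and $(B,\cdot)$ with $a(b+c)=ab-a+ac$; $\lambda_a(b)=-a+ab$. A subbrace is a subset that is a subgroup of both groups; a maximal subbrace is a proper subbrace not contained in any other proper subbrace. An ideal is a subset that is a normal subgroup of both groups and $\lambda_b$-invariant for all $b$. A brace is abelian if $xy=x+y=y+x$ for all elements. For ideals $J\subseteq I$, $I/J$ is a chief factor if it is a minimal nonzero ideal of $B/J$. The Frattini subbrace $\Phi(B)$ is the intersection of all maximal subbraces of $B$ (or $B$ if there are none). $I/J$ is a Frattini chief factor if $I/J\subseteq\Phi(B/J)$, and a complemented chief factor if there is a subbrace $T$ of $B/J$ (a complement) with $B/J=(I/J)T=(I/J)+T$ and $(I/J)\cap T=0$. *)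

theory Defs
  imports "HOL-Algebra.Group" "HOL-Algebra.Coset"
begin

record 'a brace = "'a monoid" +
  add :: "'a \<Rightarrow> 'a \<Rightarrow> 'a"
  zero :: 'a

definition add_group :: "('a, 'b) brace_scheme \<Rightarrow> 'a monoid" where
  "add_group B = \<lparr>carrier = carrier B, mult = add B, one = zero B\<rparr>"

definition add_inv :: "('a, 'b) brace_scheme \<Rightarrow> 'a \<Rightarrow> 'a" where
  "add_inv B a = inv\<^bsub>add_group B\<^esub> a"

definition skew_brace :: "('a, 'b) brace_scheme \<Rightarrow> bool" where
  "skew_brace B \<longleftrightarrow> group B \<and> group (add_group B) \<and>
     (\<forall>a\<in>carrier B. \<forall>b\<in>carrier B. \<forall>c\<in>carrier B.
        mult B a (add B b c) = add B (add B (mult B a b) (add_inv B a)) (mult B a c))"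

definition lam :: "('a, 'b) brace_scheme \<Rightarrow> 'a \<Rightarrow> 'a \<Rightarrow> 'a" where
  "lam B a b = add B (add_inv B a) (mult B a b)"

definition subbrace :: "('a, 'b) brace_scheme \<Rightarrow> 'a set \<Rightarrow> bool" where
  "subbrace B S \<longleftrightarrow> subgroup S B \<and> subgroup S (add_group B)"

definition maximal_subbrace :: "('a, 'b) brace_scheme \<Rightarrow> 'a set \<Rightarrow> bool" where
  "maximal_subbrace B M \<longleftrightarrow> subbrace B M \<and> M \<noteq> carrier B \<and>
     (\<forall>S. subbrace B S \<and> M \<subseteq> S \<and> S \<noteq> carrier B \<longrightarrow> S = M)"

text \<open>Intersection of all maximal subbraces; equals the carrier if there are none.\<close>
definition frattini :: "('a, 'b) brace_scheme \<Rightarrow> 'a set" where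
  "frattini B = carrier B \<inter> \<Inter>{M. maximal_subbrace B M}"

definition brace_ideal :: "('a, 'b) brace_scheme \<Rightarrow> 'a set \<Rightarrow> bool" where
  "brace_ideal B I \<longleftrightarrow> normal I B \<and> normal I (add_group B) \<and>
     (\<forall>b\<in>carrier B. \<forall>x\<in>I. lam B b x \<in> I)"

definition abelian_brace :: "('a, 'b) brace_scheme \<Rightarrow> bool" where
  "abelian_brace B \<longleftrightarrow> (\<forall>x\<in>carrier B. \<forall>y\<in>carrier B.
     mult B x y = add B x y \<and> add B x y = add B y x)"

definition set_add :: "('a, 'b) brace_scheme \<Rightarrow> 'a set \<Rightarrow> 'a set \<Rightarrow> 'a set" where
  "set_add B X Y = {add B x y | x y. x \<in> X \<and> y \<in> Y}"

definition set_mult :: "('a, 'b) brace_scheme \<Rightarrow> 'a set \<Rightarrow> 'a set \<Rightarrow> 'a set" where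
  "set_mult B X Y = {mult B x y | x y. x \<in> X \<and> y \<in> Y}"

text \<open>Quotient brace B/J (J an ideal): elements are the additive cosets a + J
(which coincide with the multiplicative cosets aJ); operations are the
induced set-wise operations.\<close>
definition qcoset :: "('a, 'b) brace_scheme \<Rightarrow> 'a set \<Rightarrow> 'a \<Rightarrow> 'a set" where
  "qcoset B J a = {add B a j | j. j \<in> J}"

definition quotient_brace :: "('a, 'b) brace_scheme \<Rightarrow> 'a set \<Rightarrow> 'a set brace" where
  "quotient_brace B J = \<lparr>carrier = qcoset B J ` carrier B,
     mult = set_mult B, one = J, add = set_add B, zero = J\<rparr>"

definition qsub :: "('a, 'b) brace_scheme \<Rightarrow> 'a set \<Rightarrow> 'a set \<Rightarrow> 'a set set" where
  "qsub B I J = qcoset B J ` I"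

definition chief_factor :: "('a, 'b) brace_scheme \<Rightarrow> 'a set \<Rightarrow> 'a set \<Rightarrow> bool" where
  "chief_factor B I J \<longleftrightarrow> brace_ideal B I \<and> brace_ideal B J \<and> J \<subseteq> I \<and>
     brace_ideal (quotient_brace B J) (qsub B I J) \<and>
     qsub B I J \<noteq> {zero (quotient_brace B J)} \<and>
     (\<forall>K. brace_ideal (quotient_brace B J) K \<and> K \<subseteq> qsub B I J \<and>
          K \<noteq> {zero (quotient_brace B J)} \<longrightarrow> K = qsub B I J)"

definition frattini_chief_factor :: "('a, 'b) brace_scheme \<Rightarrow> 'a set \<Rightarrow> 'a set \<Rightarrow> bool" where
  "frattini_chief_factor B I J \<longleftrightarrow> chief_factor B I J \<and>
     qsub B I J \<subseteq> frattini (quotient_brace B J)"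

definition is_complement :: "('a, 'b) brace_scheme \<Rightarrow> 'a set \<Rightarrow> 'a set \<Rightarrow> 'a set set \<Rightarrow> bool" where
  "is_complement B I J T \<longleftrightarrow> subbrace (quotient_brace B J) T \<and>
     carrier (quotient_brace B J) = set_mult (quotient_brace B J) (qsub B I J) T \<and>
     carrier (quotient_brace B J) = set_add (quotient_brace B J) (qsub B I J) T \<and>
     qsub B I J \<inter> T = {zero (quotient_brace B J)}"

definition complemented_chief_factor :: "('a, 'b) brace_scheme \<Rightarrow> 'a set \<Rightarrow> 'a set \<Rightarrow> bool" where
  "complemented_chief_factor B I J \<longleftrightarrow> chief_factor B I J \<and> (\<exists>T. is_complement B I J T)"

end

theory Submission
  imports Defs "HOL-Algebra.SndIsomorphismGrp"
begin

text \<open>Let \<open>N\<close> be a minimal ideal of a skew brace \<open>C\<close> that is an abelian brace. For an ideal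
\<open>N\<close> and a subbrace \<open>S\<close> one has \<open>N + S = NS\<close>, and this is a subbrace. Whenever \<open>N + S = C\<close>,
the intersection \<open>N \<inter> S\<close> is an ideal of \<open>C\<close>: it is normalised and \<open>\<lambda>\<close>-stabilised by \<open>S\<close>
because \<open>N\<close> is an ideal and \<open>S\<close> a subbrace, and by \<open>N\<close> because \<open>N\<close> is abelian. So
\<open>N \<inter> S\<close> is \<open>0\<close> or \<open>N\<close>.
If \<open>N\<close> is not contained in some maximal subbrace \<open>M\<close>, then \<open>N + M = C\<close> and \<open>N \<inter> M = 0\<close>, so
\<open>M\<close> is a complement. If \<open>T\<close> is a complement and \<open>T \<subseteq> S\<close> with \<open>S\<close> a proper subbrace,
then \<open>N + S = C\<close> and \<open>N \<inter> S = 0\<close>, whence \<open>S = T\<close> by the Dedekind argument; so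
complements are maximal, even without finiteness. The theorem is this dichotomy applied
to the minimal ideal \<open>I/J\<close> of the quotient brace \<open>B/J\<close>.\<close>

lemma add_group_simps [simp]:
  "carrier (add_group C) = carrier C" "mult (add_group C) = add C" "one (add_group C) = zero C"
  by (simp_all add: add_group_def)

lemma set_mult_eq_Coset_set_mult: "Defs.set_mult C X Y = X <#>\<^bsub>C\<^esub> Y"
  unfolding Defs.set_mult_def Coset.set_mult_def by auto

lemma set_add_eq_Coset_set_mult: "set_add C X Y = X <#>\<^bsub>add_group C\<^esub> Y"
  unfolding set_add_def Coset.set_mult_def by auto

definition minimal_ideal :: "('a, 'b) brace_scheme \<Rightarrow> 'a set \<Rightarrow> bool" where
  "minimal_ideal C N \<longleftrightarrow> brace_ideal C N \<and> N \<noteq> {zero C} \<and>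
     (\<forall>K. brace_ideal C K \<and> K \<subseteq> N \<and> K \<noteq> {zero C} \<longrightarrow> K = N)"

definition brace_complement :: "('a, 'b) brace_scheme \<Rightarrow> 'a set \<Rightarrow> 'a set \<Rightarrow> bool" where
  "brace_complement C N T \<longleftrightarrow> subbrace C T \<and> carrier C = set_add C N T \<and> N \<inter> T = {zero C}"

locale skew_left_brace =
  fixes C :: "('a, 'b) brace_scheme" (structure)
  assumes skew_brace: "skew_brace C"
begin

abbreviation brace_add (infixl "\<oplus>" 65) where "x \<oplus> y \<equiv> add C x y"
abbreviation brace_neg ("\<ominus> _" [80] 80) where "\<ominus> x \<equiv> add_inv C x"
abbreviation brace_zero ("\<zero>") where "\<zero> \<equiv> zero C"

sublocale G: group C using skew_brace skew_brace_def by auto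
sublocale A: group "add_group C" using skew_brace skew_brace_def by auto

lemma add_closed [simp]: "x \<in> carrier C \<Longrightarrow> y \<in> carrier C \<Longrightarrow> x \<oplus> y \<in> carrier C"
  using A.m_closed[of x y] by simp

lemma add_inv_closed [simp]: "x \<in> carrier C \<Longrightarrow> \<ominus> x \<in> carrier C"
  using A.inv_closed[of x] by (simp add: add_inv_def)

lemma zero_closed [simp]: "\<zero> \<in> carrier C"
  using A.one_closed by simp

lemma add_assoc [simp]:
  "x \<in> carrier C \<Longrightarrow> y \<in> carrier C \<Longrightarrow> z \<in> carrier C \<Longrightarrow> x \<oplus> y \<oplus> z = x \<oplus> (y \<oplus> z)"
  using A.m_assoc[of x y z] by simp

lemma add_zero_left [simp]: "x \<in> carrier C \<Longrightarrow> \<zero> \<oplus> x = x"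
  using A.l_one[of x] by simp

lemma add_zero_right [simp]: "x \<in> carrier C \<Longrightarrow> x \<oplus> \<zero> = x"
  using A.r_one[of x] by simp

lemma add_inv_left [simp]: "x \<in> carrier C \<Longrightarrow> \<ominus> x \<oplus> x = \<zero>"
  using A.l_inv[of x] by (simp add: add_inv_def)

lemma add_inv_right [simp]: "x \<in> carrier C \<Longrightarrow> x \<oplus> \<ominus> x = \<zero>"
  using A.r_inv[of x] by (simp add: add_inv_def)

lemma add_inv_add_cancel_left [simp]:
  "x \<in> carrier C \<Longrightarrow> y \<in> carrier C \<Longrightarrow> \<ominus> x \<oplus> (x \<oplus> y) = y"
  using add_assoc[of "\<ominus> x" x y] by simp

lemma add_add_inv_cancel_left [simp]:
  "x \<in> carrier C \<Longrightarrow> y \<in> carrier C \<Longrightarrow> x \<oplus> (\<ominus> x \<oplus> y) = y"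
  using add_assoc[of x "\<ominus> x" y] by simp

lemma add_inv_add [simp]: "x \<in> carrier C \<Longrightarrow> y \<in> carrier C \<Longrightarrow> \<ominus> (x \<oplus> y) = \<ominus> y \<oplus> \<ominus> x"
  using A.inv_mult_group[of x y] by (simp add: add_inv_def)

lemma add_inv_add_inv [simp]: "x \<in> carrier C \<Longrightarrow> \<ominus> \<ominus> x = x"
  using A.inv_inv[of x] by (simp add: add_inv_def)

lemma add_inv_zero [simp]: "\<ominus> \<zero> = \<zero>"
  using A.inv_one by (simp add: add_inv_def)

lemma add_eq_iff_eq_add_inv:
  "y \<in> carrier C \<Longrightarrow> z \<in> carrier C \<Longrightarrow> w \<in> carrier C \<Longrightarrow> (y \<oplus> z = w) = (z = \<ominus> y \<oplus> w)"
  by auto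

lemma mult_add:
  "a \<in> carrier C \<Longrightarrow> b \<in> carrier C \<Longrightarrow> c \<in> carrier C \<Longrightarrow>
   a \<otimes> (b \<oplus> c) = a \<otimes> b \<oplus> \<ominus> a \<oplus> a \<otimes> c"
  using skew_brace unfolding skew_brace_def by blast

lemma one_eq_zero: "\<one> = \<zero>"
proof -
  have "\<one> \<otimes> (\<zero> \<oplus> \<zero>) = \<one> \<otimes> \<zero> \<oplus> \<ominus> \<one> \<oplus> \<one> \<otimes> \<zero>"
    by (rule mult_add) auto
  then have "\<ominus> \<one> = \<zero>" by simp
  then have "\<ominus> \<ominus> \<one> = \<ominus> \<zero>" by simp
  then show ?thesis by simp
qed

lemma mult_zero_right [simp]: "a \<in> carrier C \<Longrightarrow> a \<otimes> \<zero> = a"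
  by (metis one_eq_zero G.r_one)

lemma mult_add_inv:
  assumes a: "a \<in> carrier C" and b: "b \<in> carrier C"
  shows "a \<otimes> \<ominus> b = a \<oplus> \<ominus> (a \<otimes> b) \<oplus> a"
proof -
  have "a \<otimes> (b \<oplus> \<ominus> b) = a \<otimes> b \<oplus> \<ominus> a \<oplus> a \<otimes> \<ominus> b"
    using a b by (intro mult_add) auto
  then have "a \<otimes> b \<oplus> (\<ominus> a \<oplus> a \<otimes> \<ominus> b) = a"
    using a b by simp
  then have "\<ominus> a \<oplus> a \<otimes> \<ominus> b = \<ominus> (a \<otimes> b) \<oplus> a"
    using a b by (subst (asm) add_eq_iff_eq_add_inv) auto
  then have "a \<otimes> \<ominus> b = a \<oplus> (\<ominus> (a \<otimes> b) \<oplus> a)"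
    using a b by (subst (asm) add_eq_iff_eq_add_inv) auto
  then show ?thesis using a b by simp
qed

lemma lam_closed [simp]: "a \<in> carrier C \<Longrightarrow> x \<in> carrier C \<Longrightarrow> lam C a x \<in> carrier C"
  by (simp add: lam_def)

lemma lam_lam:
  "a \<in> carrier C \<Longrightarrow> b \<in> carrier C \<Longrightarrow> c \<in> carrier C \<Longrightarrow> lam C a (lam C b c) = lam C (a \<otimes> b) c"
  unfolding lam_def by (simp add: mult_add mult_add_inv G.m_assoc)

lemma lam_one: "c \<in> carrier C \<Longrightarrow> lam C \<one> c = c"
  unfolding lam_def by (simp add: one_eq_zero)

lemma add_lam_eq_mult: "a \<in> carrier C \<Longrightarrow> x \<in> carrier C \<Longrightarrow> a \<oplus> lam C a x = a \<otimes> x"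
  unfolding lam_def by simp

lemma mult_lam_inv_eq_add:
  assumes a: "a \<in> carrier C" and y: "y \<in> carrier C"
  shows "a \<otimes> lam C (inv a) y = a \<oplus> y"
proof -
  have "a \<otimes> lam C (inv a) y = a \<oplus> lam C a (lam C (inv a) y)"
    using a y by (simp add: add_lam_eq_mult)
  also have "\<dots> = a \<oplus> y"
    using a y by (simp add: lam_lam lam_one)
  finally show ?thesis .
qed

lemma subbrace_subset: "subbrace C S \<Longrightarrow> S \<subseteq> carrier C"
  unfolding subbrace_def by (blast dest: subgroup.subset)

lemma subbrace_carrier: "subbrace C S \<Longrightarrow> x \<in> S \<Longrightarrow> x \<in> carrier C"
  using subbrace_subset by blast

lemma subbrace_add_closed: "subbrace C S \<Longrightarrow> x \<in> S \<Longrightarrow> y \<in> S \<Longrightarrow> x \<oplus> y \<in> S"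
  unfolding subbrace_def using subgroup.m_closed[of S "add_group C"] by simp

lemma subbrace_add_inv_closed: "subbrace C S \<Longrightarrow> x \<in> S \<Longrightarrow> \<ominus> x \<in> S"
  unfolding subbrace_def add_inv_def by (blast dest: subgroup.m_inv_closed)

lemma subbrace_zero: "subbrace C S \<Longrightarrow> \<zero> \<in> S"
  unfolding subbrace_def using subgroup.one_closed[of S "add_group C"] by simp

lemma subbrace_mult_closed: "subbrace C S \<Longrightarrow> x \<in> S \<Longrightarrow> y \<in> S \<Longrightarrow> x \<otimes> y \<in> S"
  unfolding subbrace_def by (blast dest: subgroup.m_closed)

lemma subbrace_inv_closed: "subbrace C S \<Longrightarrow> x \<in> S \<Longrightarrow> inv x \<in> S"
  unfolding subbrace_def by (blast dest: subgroup.m_inv_closed)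

lemma subbrace_lam_closed: "subbrace C S \<Longrightarrow> s \<in> S \<Longrightarrow> x \<in> S \<Longrightarrow> lam C s x \<in> S"
  unfolding lam_def by (intro subbrace_add_closed subbrace_add_inv_closed subbrace_mult_closed)

lemma brace_ideal_imp_subbrace: "brace_ideal C N \<Longrightarrow> subbrace C N"
  unfolding brace_ideal_def subbrace_def by (auto dest: normal_imp_subgroup)

lemma brace_ideal_carrier: "brace_ideal C N \<Longrightarrow> x \<in> N \<Longrightarrow> x \<in> carrier C"
  using brace_ideal_imp_subbrace subbrace_carrier by blast

lemma brace_ideal_mult_conj_closed:
  assumes N: "brace_ideal C N" and x: "x \<in> carrier C" and h: "h \<in> N"
  shows "x \<otimes> h \<otimes> inv x \<in> N"
  using N x h G.normal_inv_iff[of N] unfolding brace_ideal_def by auto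

lemma brace_ideal_add_conj_closed:
  assumes N: "brace_ideal C N" and x: "x \<in> carrier C" and h: "h \<in> N"
  shows "x \<oplus> (h \<oplus> \<ominus> x) \<in> N"
proof -
  have "normal N (add_group C)" using N brace_ideal_def by auto
  then have "x \<oplus> h \<oplus> \<ominus> x \<in> N" using A.normal_inv_iff x h by (simp add: add_inv_def)
  then show ?thesis using x brace_ideal_carrier[OF N h] by simp
qed

lemma brace_ideal_lam_closed: "brace_ideal C N \<Longrightarrow> b \<in> carrier C \<Longrightarrow> x \<in> N \<Longrightarrow> lam C b x \<in> N"
  unfolding brace_ideal_def by blast

lemma subset_set_add_left:
  assumes S: "subbrace C S" and T: "subbrace C T"
  shows "S \<subseteq> set_add C S T"
proof
  fix x assume "x \<in> S"
  then have "x = x \<oplus> \<zero>" "x \<in> S" "\<zero> \<in> T" using subbrace_carrier[OF S] subbrace_zero[OF T] by auto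
  then show "x \<in> set_add C S T" unfolding set_add_def by blast
qed

lemma subset_set_add_right:
  assumes S: "subbrace C S" and T: "subbrace C T"
  shows "T \<subseteq> set_add C S T"
proof
  fix x assume "x \<in> T"
  then have "x = \<zero> \<oplus> x" "x \<in> T" "\<zero> \<in> S" using subbrace_carrier[OF T] subbrace_zero[OF S] by auto
  then show "x \<in> set_add C S T" unfolding set_add_def by blast
qed

lemma brace_ideal_set_add_eq_set_mult:
  assumes N: "brace_ideal C N" and S: "subbrace C S"
  shows "set_add C N S = Defs.set_mult C N S"
proof
  show "set_add C N S \<subseteq> Defs.set_mult C N S"
  proof
    fix x assume "x \<in> set_add C N S"
    then obtain n s where n: "n \<in> N" and s: "s \<in> S" and x: "x = n \<oplus> s"
      unfolding set_add_def by auto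
    have nc: "n \<in> carrier C" and sc: "s \<in> carrier C"
      using n s brace_ideal_carrier[OF N] subbrace_carrier[OF S] by auto
    define n1 where "n1 = \<ominus> s \<oplus> (n \<oplus> s)"
    have n1: "n1 \<in> N" using brace_ideal_add_conj_closed[OF N, of "\<ominus> s" n] n nc sc by (simp add: n1_def)
    have x1: "x = s \<oplus> n1" using x nc sc by (simp add: n1_def)
    define n2 where "n2 = lam C (inv s) n1"
    have n2: "n2 \<in> N" using brace_ideal_lam_closed[OF N] n1 sc by (simp add: n2_def)
    have x2: "x = s \<otimes> n2"
      using x1 mult_lam_inv_eq_add[OF sc brace_ideal_carrier[OF N n1]] by (simp add: n2_def)
    have "x = (s \<otimes> n2 \<otimes> inv s) \<otimes> s"
      using x2 sc brace_ideal_carrier[OF N n2] by (simp add: G.m_assoc)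
    moreover have "s \<otimes> n2 \<otimes> inv s \<in> N" using brace_ideal_mult_conj_closed[OF N sc n2] .
    ultimately show "x \<in> Defs.set_mult C N S" using s unfolding Defs.set_mult_def by blast
  qed
  show "Defs.set_mult C N S \<subseteq> set_add C N S"
  proof
    fix x assume "x \<in> Defs.set_mult C N S"
    then obtain n s where n: "n \<in> N" and s: "s \<in> S" and x: "x = n \<otimes> s"
      unfolding Defs.set_mult_def by auto
    have nc: "n \<in> carrier C" and sc: "s \<in> carrier C"
      using n s brace_ideal_carrier[OF N] subbrace_carrier[OF S] by auto
    define y where "y = inv s \<otimes> n \<otimes> s"
    have y: "y \<in> N" using brace_ideal_mult_conj_closed[OF N, of "inv s" n] n sc by (simp add: y_def)
    have x1: "x = s \<otimes> y" using x nc sc by (simp add: y_def G.m_assoc[symmetric])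
    define z where "z = lam C s y"
    have z: "z \<in> N" using brace_ideal_lam_closed[OF N sc y] by (simp add: z_def)
    have x2: "x = s \<oplus> z" using x1 add_lam_eq_mult[OF sc brace_ideal_carrier[OF N y]] by (simp add: z_def)
    have "x = s \<oplus> (z \<oplus> \<ominus> s) \<oplus> s" using x2 sc brace_ideal_carrier[OF N z] by simp
    moreover have "s \<oplus> (z \<oplus> \<ominus> s) \<in> N" using brace_ideal_add_conj_closed[OF N sc z] .
    ultimately show "x \<in> set_add C N S" using s unfolding set_add_def by blast
  qed
qed

lemma brace_ideal_set_add_subbrace:
  assumes N: "brace_ideal C N" and S: "subbrace C S"
  shows "subbrace C (set_add C N S)"
proof -
  have "second_isomorphism_grp N (add_group C) S" "second_isomorphism_grp N C S"
    using N S unfolding brace_ideal_def subbrace_def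
      second_isomorphism_grp_def second_isomorphism_grp_axioms_def by auto
  then have "subgroup (N <#>\<^bsub>add_group C\<^esub> S) (add_group C)" "subgroup (N <#>\<^bsub>C\<^esub> S) C"
    by (simp_all add: second_isomorphism_grp.normal_set_mult_subgroup)
  then show ?thesis
    unfolding subbrace_def using brace_ideal_set_add_eq_set_mult[OF N S]
    by (simp add: set_add_eq_Coset_set_mult set_mult_eq_Coset_set_mult)
qed

context
  fixes N S
  assumes N: "brace_ideal C N" and S: "subbrace C S"
    and carrier_eq: "carrier C = set_add C N S"
    and N_abelian: "abelian_brace (C\<lparr>carrier := N\<rparr>)"
begin

lemma N_mult_eq_add: "x \<in> N \<Longrightarrow> y \<in> N \<Longrightarrow> x \<otimes> y = x \<oplus> y"
  and N_add_commute: "x \<in> N \<Longrightarrow> y \<in> N \<Longrightarrow> x \<oplus> y = y \<oplus> x"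
  using N_abelian unfolding abelian_brace_def by simp_all

lemma inter_normal: "N \<inter> S \<lhd> C"
proof -
  have "c \<otimes> h \<otimes> inv c \<in> N \<inter> S" if c: "c \<in> carrier C" and h: "h \<in> N \<inter> S" for c h
  proof -
    obtain n s where n: "n \<in> N" and s: "s \<in> S" and c_eq: "c = n \<otimes> s"
      using c carrier_eq brace_ideal_set_add_eq_set_mult[OF N S] unfolding Defs.set_mult_def by auto
    have nc: "n \<in> carrier C" and sc: "s \<in> carrier C" and hc: "h \<in> carrier C"
      using n s h brace_ideal_carrier[OF N] subbrace_carrier[OF S] by auto
    define y where "y = s \<otimes> h \<otimes> inv s"
    have yN: "y \<in> N" using brace_ideal_mult_conj_closed[OF N sc] h by (simp add: y_def)
    have yS: "y \<in> S" using h s by (simp add: y_def subbrace_mult_closed subbrace_inv_closed S)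
    have "c \<otimes> h \<otimes> inv c = n \<otimes> y \<otimes> inv n"
      using nc sc hc by (simp add: c_eq y_def G.m_assoc G.inv_mult_group)
    also have "\<dots> = y \<otimes> n \<otimes> inv n"
      using n yN N_mult_eq_add N_add_commute by metis
    also have "\<dots> = y" using nc brace_ideal_carrier[OF N yN] by (simp add: G.m_assoc)
    finally show ?thesis using yN yS by simp
  qed
  moreover have "subgroup (N \<inter> S) C"
    using brace_ideal_imp_subbrace[OF N] S unfolding subbrace_def by (auto intro: G.subgroups_Inter_pair)
  ultimately show ?thesis using G.normal_inv_iff by blast
qed

lemma inter_add_normal: "N \<inter> S \<lhd> add_group C"
proof -
  have "c \<oplus> h \<oplus> \<ominus> c \<in> N \<inter> S" if c: "c \<in> carrier C" and h: "h \<in> N \<inter> S" for c h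
  proof -
    obtain n s where n: "n \<in> N" and s: "s \<in> S" and c_eq: "c = n \<oplus> s"
      using c carrier_eq unfolding set_add_def by auto
    have nc: "n \<in> carrier C" and sc: "s \<in> carrier C" and hc: "h \<in> carrier C"
      using n s h brace_ideal_carrier[OF N] subbrace_carrier[OF S] by auto
    define y where "y = s \<oplus> (h \<oplus> \<ominus> s)"
    have yN: "y \<in> N" using brace_ideal_add_conj_closed[OF N sc] h by (simp add: y_def)
    have yS: "y \<in> S" using h s by (simp add: y_def subbrace_add_closed subbrace_add_inv_closed S)
    have "c \<oplus> h \<oplus> \<ominus> c = n \<oplus> y \<oplus> \<ominus> n" using nc sc hc by (simp add: c_eq y_def)
    also have "\<dots> = y \<oplus> n \<oplus> \<ominus> n" using n yN N_add_commute by metis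
    also have "\<dots> = y" using nc brace_ideal_carrier[OF N yN] by simp
    finally show ?thesis using yN yS by simp
  qed
  moreover have "subgroup (N \<inter> S) (add_group C)"
    using brace_ideal_imp_subbrace[OF N] S unfolding subbrace_def by (auto intro: A.subgroups_Inter_pair)
  ultimately show ?thesis using A.normal_inv_iff by (simp add: add_inv_def)
qed

lemma inter_lam_closed:
  assumes c: "c \<in> carrier C" and h: "h \<in> N \<inter> S"
  shows "lam C c h \<in> N \<inter> S"
proof -
  obtain n s where n: "n \<in> N" and s: "s \<in> S" and c_eq: "c = n \<otimes> s"
    using c carrier_eq brace_ideal_set_add_eq_set_mult[OF N S] unfolding Defs.set_mult_def by auto
  have nc: "n \<in> carrier C" and sc: "s \<in> carrier C" and hc: "h \<in> carrier C"
    using n s h brace_ideal_carrier[OF N] subbrace_carrier[OF S] by auto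
  define y where "y = lam C s h"
  have yN: "y \<in> N" using brace_ideal_lam_closed[OF N sc] h by (simp add: y_def)
  have yS: "y \<in> S" using subbrace_lam_closed[OF S s] h by (simp add: y_def)
  have "lam C c h = lam C n y" using nc sc hc by (simp add: c_eq y_def lam_lam)
  also have "\<dots> = \<ominus> n \<oplus> (n \<oplus> y)" unfolding lam_def using n yN N_mult_eq_add by metis
  also have "\<dots> = y" using nc brace_ideal_carrier[OF N yN] by simp
  finally show ?thesis using yN yS by simp
qed

lemma brace_ideal_inter: "brace_ideal C (N \<inter> S)"
  unfolding brace_ideal_def using inter_normal inter_add_normal inter_lam_closed by blast

end

lemma minimal_abelian_ideal_frattini_or_complemented:
  assumes N: "minimal_ideal C N" and N_abelian: "abelian_brace (C\<lparr>carrier := N\<rparr>)"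
  shows "N \<subseteq> frattini C \<or> (\<exists>T. brace_complement C N T)"
proof (cases "\<forall>M. maximal_subbrace C M \<longrightarrow> N \<subseteq> M")
  case True
  then show ?thesis
    using N brace_ideal_imp_subbrace subbrace_subset unfolding minimal_ideal_def frattini_def by blast
next
  case False
  then obtain M where M: "maximal_subbrace C M" and N_not_sub: "\<not> N \<subseteq> M" by blast
  have M_sub: "subbrace C M" using M maximal_subbrace_def by auto
  have N_ideal: "brace_ideal C N" using N minimal_ideal_def by auto
  let ?S = "set_add C N M"
  have "M \<subseteq> ?S" "N \<subseteq> ?S"
    using brace_ideal_imp_subbrace[OF N_ideal] M_sub
    by (simp_all add: subset_set_add_left subset_set_add_right)
  then have carrier_eq: "carrier C = ?S"
    using M brace_ideal_set_add_subbrace[OF N_ideal M_sub] N_not_sub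
    unfolding maximal_subbrace_def by blast
  have "N \<inter> M = {\<zero>}"
    using N brace_ideal_inter[OF N_ideal M_sub carrier_eq N_abelian] N_not_sub
    unfolding minimal_ideal_def by blast
  then show ?thesis using M_sub carrier_eq unfolding brace_complement_def by blast
qed

lemma brace_complement_maximal:
  assumes N: "minimal_ideal C N" and N_abelian: "abelian_brace (C\<lparr>carrier := N\<rparr>)"
    and T: "brace_complement C N T"
  shows "maximal_subbrace C T"
proof -
  have N_ideal: "brace_ideal C N" and N_nonzero: "N \<noteq> {\<zero>}" using N minimal_ideal_def by auto
  have T_sub: "subbrace C T" and carrier_eq: "carrier C = set_add C N T" and NT: "N \<inter> T = {\<zero>}"
    using T unfolding brace_complement_def by auto
  have "T \<noteq> carrier C" using NT N_nonzero brace_ideal_imp_subbrace[OF N_ideal] subbrace_subset by blast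
  moreover have "S = T" if S: "subbrace C S" and TS: "T \<subseteq> S" and S_proper: "S \<noteq> carrier C" for S
  proof -
    have "set_add C N T \<subseteq> set_add C N S" using TS unfolding set_add_def by blast
    moreover have "set_add C N S \<subseteq> carrier C"
      using brace_ideal_set_add_subbrace[OF N_ideal S] subbrace_subset by blast
    ultimately have carrier_eq_S: "carrier C = set_add C N S" using carrier_eq by blast
    have NS: "N \<inter> S = {\<zero>}"
    proof (rule ccontr)
      assume "N \<inter> S \<noteq> {\<zero>}"
      then have "N \<subseteq> S"
        using N brace_ideal_inter[OF N_ideal S carrier_eq_S N_abelian] unfolding minimal_ideal_def by blast
      then have "set_add C N S \<subseteq> S" using subbrace_add_closed[OF S] unfolding set_add_def by blast
      then show False using carrier_eq_S S_proper subbrace_subset[OF S] by blast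
    qed
    have "S \<subseteq> T"
    proof
      fix s assume s: "s \<in> S"
      then obtain n t where n: "n \<in> N" and t: "t \<in> T" and s_eq: "s = n \<oplus> t"
        using carrier_eq subbrace_carrier[OF S] unfolding set_add_def by blast
      have nc: "n \<in> carrier C" and tc: "t \<in> carrier C"
        using n t brace_ideal_carrier[OF N_ideal] subbrace_carrier[OF T_sub] by auto
      have "n = s \<oplus> \<ominus> t" using s_eq nc tc by simp
      then have "n \<in> S" using s t TS subbrace_add_closed[OF S] subbrace_add_inv_closed[OF S] by auto
      then have "n = \<zero>" using NS n by blast
      then show "s \<in> T" using s_eq t tc by simp
    qed
    then show ?thesis using TS by blast
  qed
  ultimately show ?thesis using T_sub unfolding maximal_subbrace_def by blast
qed

context
  fixes J assumes J: "brace_ideal C J"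
begin

lemma qcoset_eq_add_l_coset: "qcoset C J a = a <#\<^bsub>add_group C\<^esub> J"
  unfolding qcoset_def l_coset_def by auto

lemma qcoset_eq_l_coset:
  assumes a: "a \<in> carrier C"
  shows "qcoset C J a = a <#\<^bsub>C\<^esub> J"
proof
  show "qcoset C J a \<subseteq> a <#\<^bsub>C\<^esub> J"
  proof
    fix x assume "x \<in> qcoset C J a"
    then obtain j where j: "j \<in> J" and x: "x = a \<oplus> j" unfolding qcoset_def by auto
    have "x = a \<otimes> lam C (inv a) j" using mult_lam_inv_eq_add[OF a] brace_ideal_carrier[OF J j] x by simp
    moreover have "lam C (inv a) j \<in> J" using brace_ideal_lam_closed[OF J, of "inv a" j] a j by simp
    ultimately show "x \<in> a <#\<^bsub>C\<^esub> J" unfolding l_coset_def by blast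
  qed
  show "a <#\<^bsub>C\<^esub> J \<subseteq> qcoset C J a"
  proof
    fix x assume "x \<in> a <#\<^bsub>C\<^esub> J"
    then obtain j where j: "j \<in> J" and x: "x = a \<otimes> j" unfolding l_coset_def by auto
    have "x = a \<oplus> lam C a j" using add_lam_eq_mult[OF a] brace_ideal_carrier[OF J j] x by simp
    moreover have "lam C a j \<in> J" using brace_ideal_lam_closed[OF J a j] .
    ultimately show "x \<in> qcoset C J a" unfolding qcoset_def by blast
  qed
qed

lemma set_add_qcoset [simp]:
  assumes "a \<in> carrier C" "b \<in> carrier C"
  shows "set_add C (qcoset C J a) (qcoset C J b) = qcoset C J (a \<oplus> b)"
proof -
  have "J \<lhd> add_group C" using J brace_ideal_def by auto
  then show ?thesis
    using assms normal.rcos_sum[of J "add_group C" a b] normal.coset_eq[of J "add_group C"]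
    by (simp add: qcoset_eq_add_l_coset set_add_eq_Coset_set_mult)
qed

lemma set_mult_qcoset [simp]:
  assumes "a \<in> carrier C" "b \<in> carrier C"
  shows "Defs.set_mult C (qcoset C J a) (qcoset C J b) = qcoset C J (a \<otimes> b)"
proof -
  have "J \<lhd> C" using J brace_ideal_def by auto
  then show ?thesis
    using assms normal.rcos_sum[of J C a b] normal.coset_eq[of J C]
    by (simp add: qcoset_eq_l_coset set_mult_eq_Coset_set_mult)
qed

lemma qcoset_zero: "qcoset C J \<zero> = J"
  unfolding qcoset_def using brace_ideal_carrier[OF J] by force

text \<open>The group axioms of \<open>C/J\<close> are taken as hypotheses rather than reproved: in the
application they are part of the hypothesis that \<open>I/J\<close> is an ideal of \<open>B/J\<close>.\<close>

lemma quotient_brace_skew_brace: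
  assumes mult_group: "group (quotient_brace C J)" and add_group: "group (add_group (quotient_brace C J))"
  shows "skew_brace (quotient_brace C J)"
proof -
  let ?Q = "quotient_brace C J"
  interpret Q: group "add_group ?Q" by (rule add_group)
  have add_inv_qcoset: "add_inv ?Q (qcoset C J a) = qcoset C J (\<ominus> a)" if a: "a \<in> carrier C" for a
  proof -
    have "inv\<^bsub>add_group ?Q\<^esub> (qcoset C J a) = qcoset C J (\<ominus> a)"
      using a by (intro Q.inv_equality) (auto simp: quotient_brace_def qcoset_zero)
    then show ?thesis by (simp add: add_inv_def)
  qed
  have "mult ?Q X (add ?Q Y Z) = add ?Q (add ?Q (mult ?Q X Y) (add_inv ?Q X)) (mult ?Q X Z)"
    if XYZ: "X \<in> carrier ?Q" "Y \<in> carrier ?Q" "Z \<in> carrier ?Q" for X Y Z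
  proof -
    obtain a b c where abc: "a \<in> carrier C" "b \<in> carrier C" "c \<in> carrier C"
      and XYZ_eq: "X = qcoset C J a" "Y = qcoset C J b" "Z = qcoset C J c"
      using XYZ unfolding quotient_brace_def by auto
    show ?thesis
      using abc unfolding XYZ_eq add_inv_qcoset[OF abc(1)] by (simp add: quotient_brace_def mult_add)
  qed
  then show ?thesis unfolding skew_brace_def using mult_group add_group by blast
qed

end

end

lemma chief_factor_minimal_ideal:
  "chief_factor B I J \<Longrightarrow> minimal_ideal (quotient_brace B J) (qsub B I J)"
  unfolding chief_factor_def minimal_ideal_def by blast

lemma is_complement_iff_brace_complement:
  assumes "skew_brace (quotient_brace B J)" and "brace_ideal (quotient_brace B J) (qsub B I J)"
  shows "is_complement B I J T \<longleftrightarrow> brace_complement (quotient_brace B J) (qsub B I J) T"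
  using skew_left_brace.brace_ideal_set_add_eq_set_mult[OF skew_left_brace.intro[OF assms(1)] assms(2), of T]
  unfolding is_complement_def brace_complement_def by auto

theorem lemma4p12:
  fixes B :: "('a, 'b) brace_scheme" and I J :: "'a set"
  assumes "skew_brace B"
    and "chief_factor B I J"
    and "abelian_brace ((quotient_brace B J)\<lparr>carrier := qsub B I J\<rparr>)"
  shows "(frattini_chief_factor B I J \<or> complemented_chief_factor B I J) \<and>
         (finite (carrier B) \<longrightarrow>
            (\<forall>T. is_complement B I J T \<longrightarrow> maximal_subbrace (quotient_brace B J) T))"
proof -
  let ?Q = "quotient_brace B J" and ?N = "qsub B I J"
  have J: "brace_ideal B J" using assms(2) chief_factor_def by auto
  have minimal: "minimal_ideal ?Q ?N" using chief_factor_minimal_ideal[OF assms(2)] .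
  then have N: "brace_ideal ?Q ?N" using minimal_ideal_def by auto
  then have "group ?Q" "group (add_group ?Q)" unfolding brace_ideal_def normal_def by auto
  then have skew_Q: "skew_brace ?Q"
    using skew_left_brace.quotient_brace_skew_brace[OF skew_left_brace.intro[OF assms(1)] J] by blast
  interpret Q: skew_left_brace ?Q using skew_Q by (rule skew_left_brace.intro)
  note complement_iff = is_complement_iff_brace_complement[OF skew_Q N]
  have "?N \<subseteq> frattini ?Q \<or> (\<exists>T. brace_complement ?Q ?N T)"
    using Q.minimal_abelian_ideal_frattini_or_complemented[OF minimal assms(3)] .
  then have "frattini_chief_factor B I J \<or> complemented_chief_factor B I J"
    using assms(2) unfolding frattini_chief_factor_def complemented_chief_factor_def complement_iff
    by blast
  moreover have "maximal_subbrace ?Q T" if "is_complement B I J T" for T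
    using Q.brace_complement_maximal[OF minimal assms(3)] that unfolding complement_iff .
  ultimately show ?thesis by blast
qed

end
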